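(* For all integers $n\ge1$, $k\ge0$, every sequence $\boldsymbol a$ of positive reals and all $t$, \[ \theta_{n;k}(t)=\sum_{j=0}^{k} t^j\,\theta_{n;j}(1)\,(1-t)^{k-j}\,\theta_{n;k-j}(0), \] where $\theta_{n;j}(1)=h_j(a_1,\dots,a_n)$ is the complete homogeneous symmetric polynomial and $\theta_{n;j}(0)=e_j(a_1,\dots,a_n)$ is the elementary symmetric polynomial.
   Context: Let $\boldsymbol a=(a_j)_{j\ge1}$ be a sequence of positive reals. For integers $n\ge1$, $k\ge0$ let $\mathcal M_{n,k}=\{(\ell_1,\dots,\ell_k)\in\mathbb N^k: n\ge\ell_1\ge\cdots\ge\ell_k\ge1\}$. For $\vec\ell\in\mathcal M_{n,k}$ let $\sigma(\vec\ell)=|\{1\le j\le k-1:\ell_j=\ell_{j+1}\}|$ and $w(\vec\ell)=\prod_{j=1}^k a_{\ell_j}$. Define $\theta_{n;k}(t)=\sum_{\vec\ell\in\mathcal M_{n,k}}w(\vec\ell)\,t^{\sigma(\vec\ell)}$, with $\theta_{n;0}(t)=1$. *)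

theory Defs
  imports "HOL-Analysis.Analysis" "HOL-Library.Multiset"
begin

text \<open>Weakly decreasing tuples (l_1,...,l_k) with n >= l_1 >= ... >= l_k >= 1,
  represented as functions on indices 0..k-1 (value 0 outside).\<close>
definition M :: "nat \<Rightarrow> nat \<Rightarrow> (nat \<Rightarrow> nat) set" where
  "M n k = {l. (\<forall>j<k. 1 \<le> l j \<and> l j \<le> n) \<and> (\<forall>j. Suc j < k \<longrightarrow> l (Suc j) \<le> l j)
              \<and> (\<forall>j\<ge>k. l j = 0)}"

definition sigma :: "nat \<Rightarrow> (nat \<Rightarrow> nat) \<Rightarrow> nat" where
  "sigma k l = card {j. Suc j < k \<and> l j = l (Suc j)}"

definition wt :: "(nat \<Rightarrow> real) \<Rightarrow> nat \<Rightarrow> (nat \<Rightarrow> nat) \<Rightarrow> real" where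
  "wt a k l = (\<Prod>j<k. a (l j))"

definition theta :: "(nat \<Rightarrow> real) \<Rightarrow> nat \<Rightarrow> nat \<Rightarrow> real \<Rightarrow> real" where
  "theta a n k t = (\<Sum>l\<in>M n k. wt a k l * t ^ sigma k l)"

definition hcomp :: "(nat \<Rightarrow> real) \<Rightarrow> nat \<Rightarrow> nat \<Rightarrow> real" where
  "hcomp a n j = (\<Sum>A\<in>{A. set_mset A \<subseteq> {1..n} \<and> size A = j}. \<Prod>i\<in>#A. a i)"

definition elem :: "(nat \<Rightarrow> real) \<Rightarrow> nat \<Rightarrow> nat \<Rightarrow> real" where
  "elem a n j = (\<Sum>S\<in>{S. S \<subseteq> {1..n} \<and> card S = j}. \<Prod>i\<in>S. a i)"

end

theory Submission
  imports Defs "HOL-Computational_Algebra.Formal_Power_Series"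
begin

(* Splitting the tuples according to whether their largest part equals n + 1 gives
     theta(n+1; k+1) = theta(n; k+1) + a_{n+1} (1 - t) theta(n; k) + a_{n+1} t theta(n+1; k),
   i.e. (1 - a_{n+1} t s X) F_{n+1}(t, s) = (1 + a_{n+1} (1 - t) s X) F_n(t, s) for the series
   F_n(t, s) = \<Sum>_k theta(n; k)(t) (sX)^k.  Specialising (t, s) to (1, t) and to (0, 1 - t)
   shows that F_n(1, t) F_n(0, 1 - t) obeys the same relation as F_n(t, 1); cancelling the
   factor 1 - a_{n+1} t X in the integral domain of power series gives
   F_n(t, 1) = F_n(1, t) F_n(0, 1 - t), whose coefficients are the convolution formula.
   At t = 1 and t = 0 the recursion is the Pascal-type recursion of h and of e, respectively. *)

unbundle no vec_syntax
notation fps_nth (infixl "$" 75)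

lemma fps_linear_recurrence:
  fixes f g :: "'a::comm_ring_1 fps"
  assumes "g $ 0 = f $ 0"
    and "\<And>k. g $ Suc k = f $ Suc k + x * f $ k + y * g $ k"
  shows "(1 - fps_const y * fps_X) * g = (1 + fps_const x * fps_X) * f"
proof (rule fps_ext)
  fix k show "((1 - fps_const y * fps_X) * g) $ k = ((1 + fps_const x * fps_X) * f) $ k"
  proof (cases k)
    case (Suc j)
    have "((1 - fps_const y * fps_X) * g) $ Suc j = g $ Suc j - y * g $ j"
      by (simp add: algebra_simps mult.assoc)
    moreover have "((1 + fps_const x * fps_X) * f) $ Suc j = f $ Suc j + x * f $ j"
      by (simp add: algebra_simps mult.assoc)
    ultimately show ?thesis using assms(2)[of j] Suc by (simp add: algebra_simps)
  qed (simp add: assms(1))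
qed

lemma nat_recurrence_unique:
  fixes f g :: "nat \<Rightarrow> nat \<Rightarrow> 'a::semiring"
  assumes "\<And>k. f 0 k = g 0 k" and "\<And>n. f n 0 = g n 0"
    and "\<And>n k. f (Suc n) (Suc k) = f n (Suc k) + x n * f n k + y n * f (Suc n) k"
    and "\<And>n k. g (Suc n) (Suc k) = g n (Suc k) + x n * g n k + y n * g (Suc n) k"
  shows "f n k = g n k"
proof (induction n arbitrary: k)
  case (Suc n)
  show ?case by (induction k) (simp_all add: assms Suc.IH)
qed (fact assms(1))

lemma finite_M: "finite (M n k)"
proof -
  have "M n k \<subseteq> {f. \<forall>x. (x \<in> {..<k} \<longrightarrow> f x \<in> {0..n}) \<and> (x \<notin> {..<k} \<longrightarrow> f x = 0)}"
    by (auto simp: M_def)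
  then show ?thesis by (rule finite_subset) (rule finite_set_of_finite_funs, auto)
qed

lemma M_le_head: "l \<in> M n k \<Longrightarrow> j < k \<Longrightarrow> l j \<le> l 0"
proof (induction j)
  case (Suc j) then show ?case unfolding M_def
    by (metis (no_types, lifting) Suc_lessD le_trans mem_Collect_eq)
qed simp

lemma M_head_le: "l \<in> M n k \<Longrightarrow> l 0 \<le> n"
  by (cases k) (auto simp: M_def)

lemma M_0_right: "M n 0 = {\<lambda>_. 0}"
  by (auto simp: M_def)

lemma M_0_left: "M 0 k = (if k = 0 then {\<lambda>_. 0} else {})"
  by (auto simp: M_def)

lemma theta_0_right: "theta a n 0 t = 1"
  by (simp add: theta_def M_0_right wt_def sigma_def)

lemma theta_0_left: "theta a 0 k t = (if k = 0 then 1 else 0)"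
  by (simp add: theta_def M_0_left wt_def sigma_def)

definition M_top :: "nat \<Rightarrow> nat \<Rightarrow> (nat \<Rightarrow> nat) set" where
  "M_top n k = {l \<in> M n k. l 0 = n}"

definition theta_top :: "(nat \<Rightarrow> real) \<Rightarrow> nat \<Rightarrow> nat \<Rightarrow> real \<Rightarrow> real" where
  "theta_top a n k t = (\<Sum>l\<in>M_top n k. wt a k l * t ^ sigma k l)"

lemma M_Suc_eq: "M (Suc n) k = M n k \<union> M_top (Suc n) k"
proof (intro equalityI subsetI)
  fix l assume l: "l \<in> M (Suc n) k"
  show "l \<in> M n k \<union> M_top (Suc n) k"
  proof (cases "l 0 = Suc n")
    case False
    with M_head_le[OF l] have "l 0 \<le> n" by simp
    then have "\<forall>j<k. l j \<le> n" using M_le_head[OF l] le_trans by blast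
    then show ?thesis using l by (auto simp: M_def)
  qed (use l in \<open>auto simp: M_top_def\<close>)
qed (auto simp: M_def M_top_def)

lemma M_disjoint_M_top: "M n k \<inter> M_top (Suc n) k = {}"
  using M_head_le by (fastforce simp: M_top_def)

lemma theta_Suc_eq: "theta a (Suc n) k t = theta a n k t + theta_top a (Suc n) k t"
  unfolding theta_def theta_top_def M_Suc_eq
  by (rule sum.union_disjoint) (use finite_M M_disjoint_M_top in \<open>auto simp: M_top_def\<close>)

lemma wt_case_nat: "wt a (Suc k) (case_nat c l) = a c * wt a k l"
  by (simp add: wt_def prod.lessThan_Suc_shift del: prod.lessThan_Suc)

lemma sigma_case_nat:
  "sigma (Suc k) (case_nat c l) = sigma k l + (if 0 < k \<and> l 0 = c then 1 else 0)"
proof -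
  have eq: "{j. Suc j < Suc k \<and> case_nat c l j = case_nat c l (Suc j)} =
     (if 0 < k \<and> l 0 = c then {0} else {}) \<union> Suc ` {j. Suc j < k \<and> l j = l (Suc j)}"
  proof (intro set_eqI)
    fix x show "x \<in> {j. Suc j < Suc k \<and> case_nat c l j = case_nat c l (Suc j)} \<longleftrightarrow>
      x \<in> (if 0 < k \<and> l 0 = c then {0} else {}) \<union> Suc ` {j. Suc j < k \<and> l j = l (Suc j)}"
      by (cases x) (auto simp: image_iff)
  qed
  have "finite {j. Suc j < k \<and> l j = l (Suc j)}"
    by (rule finite_subset[of _ "{..<k}"]) auto
  then show ?thesis unfolding sigma_def eq
    by (subst card_Un_disjoint) (auto simp: card_image)
qed

lemma M_top_Suc: "M_top (Suc n) (Suc k) = case_nat (Suc n) ` M (Suc n) k"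
proof (intro equalityI subsetI)
  fix l assume l: "l \<in> M_top (Suc n) (Suc k)"
  have "l = case_nat (Suc n) (l \<circ> Suc)"
    using l by (auto simp: M_top_def fun_eq_iff split: nat.splits)
  moreover have "l \<circ> Suc \<in> M (Suc n) k" using l by (auto simp: M_top_def M_def)
  ultimately show "l \<in> case_nat (Suc n) ` M (Suc n) k" by blast
next
  fix l assume "l \<in> case_nat (Suc n) ` M (Suc n) k"
  then obtain l' where l': "l' \<in> M (Suc n) k" "l = case_nat (Suc n) l'" by auto
  then show "l \<in> M_top (Suc n) (Suc k)"
    using M_head_le[OF l'(1)] by (auto simp: M_top_def M_def split: nat.splits)
qed

(* Prepending the part n + 1 creates a new repetition exactly when the old tuple also
   started with n + 1, which accounts for the factor t in front of theta_top. *)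
lemma theta_top_Suc:
  "theta_top a (Suc n) (Suc k) t = a (Suc n) * (theta a n k t + t * theta_top a (Suc n) k t)"
proof -
  let ?f = "\<lambda>l. wt a k l * t ^ sigma k l"
  have inj: "inj (case_nat (Suc n) :: (nat \<Rightarrow> nat) \<Rightarrow> _)"
    by (auto simp: inj_def fun_eq_iff) (metis old.nat.simps(5))
  have not_top: "l \<in> M n k \<Longrightarrow> l 0 \<noteq> Suc n" for l
    using M_head_le by fastforce
  have top_nonempty: "l \<in> M_top (Suc n) k \<Longrightarrow> 0 < k" for l
    by (cases k) (auto simp: M_top_def M_def)
  have "theta_top a (Suc n) (Suc k) t =
      (\<Sum>l\<in>M (Suc n) k. a (Suc n) * ?f l * t ^ (if 0 < k \<and> l 0 = Suc n then 1 else 0))"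
    unfolding theta_top_def M_top_Suc
    by (subst sum.reindex)
      (use inj in \<open>auto simp: inj_on_def wt_case_nat sigma_case_nat power_add mult_ac\<close>)
  also have "\<dots> = (\<Sum>l\<in>M n k. a (Suc n) * ?f l) + (\<Sum>l\<in>M_top (Suc n) k. a (Suc n) * ?f l * t)"
    unfolding M_Suc_eq using finite_M M_disjoint_M_top not_top top_nonempty
    by (subst sum.union_disjoint) (auto simp: M_top_def intro!: arg_cong2[where f="(+)"] sum.cong)
  also have "\<dots> = a (Suc n) * (theta a n k t + t * theta_top a (Suc n) k t)"
    unfolding theta_def theta_top_def by (simp add: sum_distrib_left sum_distrib_right algebra_simps)
  finally show ?thesis .
qed

lemma theta_Suc_Suc:
  "theta a (Suc n) (Suc k) t =
     theta a n (Suc k) t + a (Suc n) * (1 - t) * theta a n k t + a (Suc n) * t * theta a (Suc n) k t"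
  using theta_Suc_eq[of a n "Suc k" t] theta_top_Suc[of a n k t] theta_Suc_eq[of a n k t]
  by (simp add: algebra_simps)

definition bounded_msets :: "nat \<Rightarrow> nat \<Rightarrow> nat multiset set" where
  "bounded_msets n k = {A. set_mset A \<subseteq> {1..n} \<and> size A = k}"

lemma finite_bounded_msets: "finite (bounded_msets n k)"
proof -
  have "bounded_msets n k \<subseteq> mset ` {xs. set xs \<subseteq> {1..n} \<and> length xs = k}"
  proof
    fix A assume "A \<in> bounded_msets n k"
    moreover obtain xs where "A = mset xs" by (metis ex_mset)
    ultimately show "A \<in> mset ` {xs. set xs \<subseteq> {1..n} \<and> length xs = k}"
      by (auto simp: bounded_msets_def)
  qed
  then show ?thesis
    by (rule finite_subset) (intro finite_imageI finite_lists_length_eq, simp)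
qed

lemma bounded_msets_Suc_Suc:
  "bounded_msets (Suc n) (Suc k) = bounded_msets n (Suc k) \<union> add_mset (Suc n) ` bounded_msets (Suc n) k"
proof (intro equalityI subsetI)
  fix A assume A: "A \<in> bounded_msets (Suc n) (Suc k)"
  show "A \<in> bounded_msets n (Suc k) \<union> add_mset (Suc n) ` bounded_msets (Suc n) k"
  proof (cases "Suc n \<in># A")
    case True
    then have "A = add_mset (Suc n) (A - {#Suc n#})" by simp
    moreover have "A - {#Suc n#} \<in> bounded_msets (Suc n) k" using A True
      by (auto simp: bounded_msets_def size_Diff_singleton dest: in_diffD)
    ultimately show ?thesis by blast
  next
    case False
    then have "set_mset A \<subseteq> {1..n}" using A by (auto simp: bounded_msets_def le_Suc_eq)
    then show ?thesis using A by (auto simp: bounded_msets_def)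
  qed
qed (auto simp: bounded_msets_def)

lemma hcomp_Suc_Suc: "hcomp a (Suc n) (Suc k) = hcomp a n (Suc k) + a (Suc n) * hcomp a (Suc n) k"
proof -
  let ?p = "\<lambda>A. \<Prod>i\<in>#A. a i"
  have disj: "bounded_msets n (Suc k) \<inter> add_mset (Suc n) ` bounded_msets (Suc n) k = {}"
    by (auto simp: bounded_msets_def)
  have "hcomp a (Suc n) (Suc k) = sum ?p (bounded_msets n (Suc k)) + sum ?p (add_mset (Suc n) ` bounded_msets (Suc n) k)"
    unfolding hcomp_def bounded_msets_def[symmetric] bounded_msets_Suc_Suc
    by (rule sum.union_disjoint) (use finite_bounded_msets disj in auto)
  also have "sum ?p (add_mset (Suc n) ` bounded_msets (Suc n) k) = a (Suc n) * sum ?p (bounded_msets (Suc n) k)"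
    by (subst sum.reindex) (auto simp: inj_on_def sum_distrib_left)
  finally show ?thesis by (simp add: hcomp_def bounded_msets_def)
qed

lemma hcomp_0_left: "hcomp a 0 k = (if k = 0 then 1 else 0)"
proof -
  have "{A. set_mset A \<subseteq> {1..0::nat} \<and> size A = k} = (if k = 0 then {{#}} else {})"
    by auto
  then show ?thesis by (simp add: hcomp_def)
qed

lemma hcomp_0_right: "hcomp a n 0 = 1"
proof -
  have "{A. set_mset A \<subseteq> {1..n} \<and> size A = 0} = {{#}}" by auto
  then show ?thesis by (simp add: hcomp_def)
qed

definition bounded_subsets :: "nat \<Rightarrow> nat \<Rightarrow> nat set set" where
  "bounded_subsets n k = {S. S \<subseteq> {1..n} \<and> card S = k}"

lemma finite_bounded_subsets: "finite (bounded_subsets n k)"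
  by (rule finite_subset[of _ "Pow {1..n}"]) (auto simp: bounded_subsets_def)

lemma bounded_subsets_Suc_Suc:
  "bounded_subsets (Suc n) (Suc k) = bounded_subsets n (Suc k) \<union> insert (Suc n) ` bounded_subsets n k"
proof (intro equalityI subsetI)
  fix S assume S: "S \<in> bounded_subsets (Suc n) (Suc k)"
  have "finite S" using S by (auto simp: bounded_subsets_def intro: finite_subset)
  show "S \<in> bounded_subsets n (Suc k) \<union> insert (Suc n) ` bounded_subsets n k"
  proof (cases "Suc n \<in> S")
    case True
    then have "S = insert (Suc n) (S - {Suc n})" by auto
    moreover have "S - {Suc n} \<in> bounded_subsets n k"
      using S True \<open>finite S\<close> by (auto simp: bounded_subsets_def)
    ultimately show ?thesis by blast
  next
    case False
    then have "S \<subseteq> {1..n}" using S by (auto simp: bounded_subsets_def le_Suc_eq)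
    then show ?thesis using S by (auto simp: bounded_subsets_def)
  qed
next
  fix S assume "S \<in> bounded_subsets n (Suc k) \<union> insert (Suc n) ` bounded_subsets n k"
  then show "S \<in> bounded_subsets (Suc n) (Suc k)"
  proof
    assume "S \<in> insert (Suc n) ` bounded_subsets n k"
    then obtain T where T: "T \<subseteq> {1..n}" "card T = k" "S = insert (Suc n) T"
      by (auto simp: bounded_subsets_def)
    moreover have "finite T" using T(1) by (rule finite_subset) simp
    moreover have "Suc n \<notin> T" using T(1) by auto
    ultimately show ?thesis by (auto simp: bounded_subsets_def)
  qed (auto simp: bounded_subsets_def)
qed

lemma elem_Suc_Suc: "elem a (Suc n) (Suc k) = elem a n (Suc k) + a (Suc n) * elem a n k"
proof -
  let ?p = "\<lambda>S. \<Prod>i\<in>S. a i"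
  have disj: "bounded_subsets n (Suc k) \<inter> insert (Suc n) ` bounded_subsets n k = {}"
    by (auto simp: bounded_subsets_def)
  have "elem a (Suc n) (Suc k) = sum ?p (bounded_subsets n (Suc k)) + sum ?p (insert (Suc n) ` bounded_subsets n k)"
    unfolding elem_def bounded_subsets_def[symmetric] bounded_subsets_Suc_Suc
    by (rule sum.union_disjoint) (use finite_bounded_subsets disj in auto)
  also have "sum ?p (insert (Suc n) ` bounded_subsets n k) = a (Suc n) * sum ?p (bounded_subsets n k)"
  proof -
    have fresh: "S \<in> bounded_subsets n k \<Longrightarrow> finite S \<and> Suc n \<notin> S" for S
      by (auto simp: bounded_subsets_def intro: finite_subset)
    then have "inj_on (insert (Suc n)) (bounded_subsets n k)"
      by (metis Diff_insert_absorb inj_on_def)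
    then show ?thesis using fresh by (subst sum.reindex) (auto simp: sum_distrib_left)
  qed
  finally show ?thesis by (simp add: elem_def bounded_subsets_def)
qed

lemma elem_0_left: "elem a 0 k = (if k = 0 then 1 else 0)"
proof -
  have "{S. S \<subseteq> {1..0::nat} \<and> card S = k} = (if k = 0 then {{}} else {})"
    by auto
  then show ?thesis by (simp add: elem_def)
qed

lemma elem_0_right: "elem a n 0 = 1"
proof -
  have "{S. S \<subseteq> {1..n} \<and> card S = 0} = {{}}"
    using finite_subset[of _ "{1..n}"] by fastforce
  then show ?thesis by (simp add: elem_def)
qed

lemma theta_at_1_eq_hcomp: "theta a n k 1 = hcomp a n k"
  by (rule nat_recurrence_unique[where x = "\<lambda>_. 0" and y = "\<lambda>n. a (Suc n)"])
    (simp_all add: theta_0_left theta_0_right hcomp_0_left hcomp_0_right theta_Suc_Suc hcomp_Suc_Suc)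

lemma theta_at_0_eq_elem: "theta a n k 0 = elem a n k"
  by (rule nat_recurrence_unique[where x = "\<lambda>n. a (Suc n)" and y = "\<lambda>_. 0"])
    (simp_all add: theta_0_left theta_0_right elem_0_left elem_0_right theta_Suc_Suc elem_Suc_Suc)

definition theta_series :: "(nat \<Rightarrow> real) \<Rightarrow> nat \<Rightarrow> real \<Rightarrow> real \<Rightarrow> real fps" where
  "theta_series a n t s = Abs_fps (\<lambda>k. s ^ k * theta a n k t)"

lemma theta_series_0: "theta_series a 0 t s = 1"
  by (rule fps_ext) (simp add: theta_series_def theta_0_left)

lemma theta_series_Suc:
  "(1 - fps_const (a (Suc n) * t * s) * fps_X) * theta_series a (Suc n) t s =
   (1 + fps_const (a (Suc n) * (1 - t) * s) * fps_X) * theta_series a n t s"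
  by (rule fps_linear_recurrence)
    (simp_all add: theta_series_def theta_0_right theta_Suc_Suc algebra_simps)

lemma theta_series_factor:
  "theta_series a n t 1 = theta_series a n 1 t * theta_series a n 0 (1 - t)"
proof (induction n)
  case 0
  show ?case by (simp add: theta_series_0)
next
  case (Suc n)
  let ?c = "a (Suc n)"
  define P where "P = 1 - fps_const (?c * t) * fps_X"
  define Q where "Q = 1 + fps_const (?c * (1 - t)) * fps_X"
  have h: "P * theta_series a (Suc n) 1 t = theta_series a n 1 t"
    using theta_series_Suc[of a n 1 t] by (simp add: P_def)
  have e: "theta_series a (Suc n) 0 (1 - t) = Q * theta_series a n 0 (1 - t)"
    using theta_series_Suc[of a n 0 "1 - t"] by (simp add: Q_def)
  have "P * theta_series a (Suc n) t 1 = Q * theta_series a n t 1"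
    using theta_series_Suc[of a n t 1] by (simp add: P_def Q_def)
  also have "\<dots> = P * (theta_series a (Suc n) 1 t * theta_series a (Suc n) 0 (1 - t))"
    unfolding Suc.IH e h[symmetric] by (simp add: mult_ac)
  finally show ?case
    by (rule mult_left_cancel[THEN iffD1, rotated]) (auto simp: P_def fps_eq_iff)
qed

theorem mainTheorem2:
  fixes a :: "nat \<Rightarrow> real" and n k :: nat and t :: real
  assumes "n \<ge> 1" and "\<And>j. j \<ge> 1 \<Longrightarrow> a j > 0"
  shows "theta a n k t = (\<Sum>j=0..k. t ^ j * theta a n j 1 * (1 - t) ^ (k - j) * theta a n (k - j) 0)
     \<and> (\<forall>j. theta a n j 1 = hcomp a n j) \<and> (\<forall>j. theta a n j 0 = elem a n j)"
proof (intro conjI allI)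
  have "theta a n k t = theta_series a n t 1 $ k"
    by (simp add: theta_series_def)
  also have "\<dots> = (theta_series a n 1 t * theta_series a n 0 (1 - t)) $ k"
    by (simp only: theta_series_factor)
  finally show "theta a n k t = (\<Sum>j=0..k. t ^ j * theta a n j 1 * (1 - t) ^ (k - j) * theta a n (k - j) 0)"
    by (simp add: fps_mult_nth theta_series_def mult_ac)
qed (simp_all add: theta_at_1_eq_hcomp theta_at_0_eq_elem)

end
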